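(* Let $k<l$ be positive integers and let $\gamma\in U(k,l)$ be diagonalizable with all eigenvalues of modulus $1$. Then $\gamma$ has an eigenvector lying in the closure $\overline{N_-^{k,l}}$ of $N_-^{k,l}$ in $\mathbb{C}^{k+l}$.
   Context: $\prec u,v\succ_{k,l}=-\sum_{j=1}^k u_j\bar v_j+\sum_{j=k+1}^{k+l}u_j\bar v_j$ on $\mathbb{C}^{k+l}$; $N_-^{k,l}=\{v:\prec v,v\succ_{k,l}<0\}$; $U(k,l)\subset GL(k+l,\mathbb{C})$ is the group of matrices preserving this form. Eigenvectors are nonzero. *)

theory Defs
  imports "Jordan_Normal_Form.Matrix" "Jordan_Normal_Form.Char_Poly" Complex_Main
begin

definition herm_form :: "nat \<Rightarrow> nat \<Rightarrow> complex vec \<Rightarrow> complex vec \<Rightarrow> complex" where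
  "herm_form k l u v =
     - (\<Sum>j<k. u $ j * cnj (v $ j)) + (\<Sum>j\<in>{k..<k+l}. u $ j * cnj (v $ j))"

definition neg_cone :: "nat \<Rightarrow> nat \<Rightarrow> complex vec set" where
  "neg_cone k l = {v \<in> carrier_vec (k+l). Re (herm_form k l v v) < 0 \<and> Im (herm_form k l v v) = 0}"

text \<open>Topological closure in C^n of a set of vectors of length n (standard topology,
  here expressed with the coordinatewise sup-metric, which induces it).\<close>
definition vec_closure :: "nat \<Rightarrow> complex vec set \<Rightarrow> complex vec set" where
  "vec_closure n S = {v \<in> carrier_vec n. \<forall>e>0. \<exists>w\<in>S. \<forall>i<n. cmod (v $ i - w $ i) < e}"

definition U_group :: "nat \<Rightarrow> nat \<Rightarrow> complex mat set" where
  "U_group k l = {g \<in> carrier_mat (k+l) (k+l). invertible_mat g \<and>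
     (\<forall>u\<in>carrier_vec (k+l). \<forall>v\<in>carrier_vec (k+l).
        herm_form k l (g *\<^sub>v u) (g *\<^sub>v v) = herm_form k l u v)}"

definition diagonalizable :: "complex mat \<Rightarrow> bool" where
  "diagonalizable A = (\<exists>D. diagonal_mat D \<and> similar_mat A D)"

end

theory Submission
  imports Defs
begin

text \<open>Eigenvectors of an element of U(k,l) with distinct unimodular eigenvalues are orthogonal
  for the indefinite form. Thus, if \<gamma> = P D P^-1 with D diagonal, then writing
  P^-1 e_0 as the sum of its components x_\<mu> along the eigenspaces of D, the vectors P x_\<mu> are
  eigenvectors of \<gamma> whose self-products add up to that of e_0, namely -1 since k > 0.
  One of them therefore has negative self-product, so \<gamma> even has an eigenvector in N_-^{k,l}
  itself.\<close>

definition herm_sign :: "nat \<Rightarrow> nat \<Rightarrow> complex" where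
  "herm_sign k a = (if a < k then -1 else 1)"

lemma herm_form_as_sum: "herm_form k l u v = (\<Sum>a<k+l. herm_sign k a * u $ a * cnj (v $ a))"
proof -
  have split: "{..<k+l} = {..<k} \<union> {k..<k+l}" by auto
  have "(\<Sum>a<k+l. herm_sign k a * u $ a * cnj (v $ a))
      = (\<Sum>a<k. herm_sign k a * u $ a * cnj (v $ a))
        + (\<Sum>a\<in>{k..<k+l}. herm_sign k a * u $ a * cnj (v $ a))"
    unfolding split by (rule sum.union_disjoint) auto
  also have "\<dots> = - (\<Sum>j<k. u $ j * cnj (v $ j)) + (\<Sum>j\<in>{k..<k+l}. u $ j * cnj (v $ j))"
    by (simp add: herm_sign_def sum_negf)
  finally show ?thesis unfolding herm_form_def by simp
qed

lemma herm_form_smult: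
  assumes "u \<in> carrier_vec (k+l)" "v \<in> carrier_vec (k+l)"
  shows "herm_form k l (a \<cdot>\<^sub>v u) (b \<cdot>\<^sub>v v) = a * cnj b * herm_form k l u v"
  using assms unfolding herm_form_as_sum by (simp add: sum_distrib_left mult_ac)

lemma Im_herm_form_self: "Im (herm_form k l v v) = 0"
proof -
  have "Im (herm_sign k a * v $ a * cnj (v $ a)) = 0" for a
    by (simp add: herm_sign_def)
  then show ?thesis unfolding herm_form_as_sum Im_sum by simp
qed

lemma herm_form_zero_left: "herm_form k l (0\<^sub>v (k+l)) v = 0"
  unfolding herm_form_as_sum by simp

lemma herm_form_zero_right: "herm_form k l u (0\<^sub>v (k+l)) = 0"
  unfolding herm_form_as_sum by simp

lemma herm_form_unit_vec_0:
  assumes "0 < k"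
  shows "herm_form k l (unit_vec (k+l) 0) (unit_vec (k+l) 0) = -1"
proof -
  have "herm_form k l (unit_vec (k+l) 0) (unit_vec (k+l) 0)
      = (\<Sum>a<k+l. if a = 0 then herm_sign k 0 else 0)"
    unfolding herm_form_as_sum by (intro sum.cong) (auto simp: unit_vec_def)
  also have "\<dots> = -1" using assms by (simp add: herm_sign_def)
  finally show ?thesis .
qed

lemma herm_form_mult_mat_vec:
  assumes P: "P \<in> carrier_mat n n" and n: "n = k+l"
    and x: "x \<in> carrier_vec n" and y: "y \<in> carrier_vec n"
  shows "herm_form k l (P *\<^sub>v x) (P *\<^sub>v y) =
    (\<Sum>i<n. \<Sum>j<n. x $ i * cnj (y $ j) * herm_form k l (col P i) (col P j))"
proof -
  have row: "(P *\<^sub>v z) $ a = (\<Sum>i<n. P $$ (a,i) * z $ i)" if "a < n" "z \<in> carrier_vec n" for a z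
    using P that by (auto simp: scalar_prod_def row_def lessThan_atLeast0 mult_ac intro!: sum.cong)
  have col: "col P i $ a = P $$ (a,i)" if "a < n" "i < n" for a i
    using P that by simp
  have "herm_form k l (P *\<^sub>v x) (P *\<^sub>v y)
      = (\<Sum>a<n. herm_sign k a * (\<Sum>i<n. P $$ (a,i) * x $ i) * cnj (\<Sum>j<n. P $$ (a,j) * y $ j))"
    unfolding herm_form_as_sum n[symmetric] using x y by (intro sum.cong) (auto simp: row)
  also have "\<dots> = (\<Sum>a<n. \<Sum>i<n. \<Sum>j<n.
      x $ i * cnj (y $ j) * (herm_sign k a * P $$ (a,i) * cnj (P $$ (a,j))))"
  proof (rule sum.cong[OF refl])
    fix a
    have "herm_sign k a * (\<Sum>i<n. P $$ (a,i) * x $ i) * cnj (\<Sum>j<n. P $$ (a,j) * y $ j)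
        = herm_sign k a * ((\<Sum>i<n. P $$ (a,i) * x $ i) * (\<Sum>j<n. cnj (P $$ (a,j) * y $ j)))"
      by (simp only: cnj_sum mult.assoc)
    also have "\<dots> = herm_sign k a * (\<Sum>i<n. \<Sum>j<n. P $$ (a,i) * x $ i * cnj (P $$ (a,j) * y $ j))"
      by (simp only: sum_product)
    also have "\<dots> = (\<Sum>i<n. \<Sum>j<n. herm_sign k a * (P $$ (a,i) * x $ i * cnj (P $$ (a,j) * y $ j)))"
      by (simp only: sum_distrib_left)
    also have "\<dots> = (\<Sum>i<n. \<Sum>j<n.
        x $ i * cnj (y $ j) * (herm_sign k a * P $$ (a,i) * cnj (P $$ (a,j))))"
      by (intro sum.cong refl) (simp add: complex_cnj_mult)
    finally show "herm_sign k a * (\<Sum>i<n. P $$ (a,i) * x $ i) * cnj (\<Sum>j<n. P $$ (a,j) * y $ j)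
        = (\<Sum>i<n. \<Sum>j<n. x $ i * cnj (y $ j) * (herm_sign k a * P $$ (a,i) * cnj (P $$ (a,j))))" .
  qed
  also have "\<dots> = (\<Sum>i<n. \<Sum>j<n. \<Sum>a<n.
      x $ i * cnj (y $ j) * (herm_sign k a * P $$ (a,i) * cnj (P $$ (a,j))))"
    by (subst sum.swap, rule sum.cong[OF refl], rule sum.swap)
  also have "\<dots> = (\<Sum>i<n. \<Sum>j<n. x $ i * cnj (y $ j) * herm_form k l (col P i) (col P j))"
    unfolding herm_form_as_sum n[symmetric] by (intro sum.cong refl) (simp add: sum_distrib_left col)
  finally show ?thesis .
qed

lemma U_group_eigenvectors_orthogonal:
  assumes \<gamma>: "\<gamma> \<in> U_group k l"
    and unimodular: "\<And>\<mu>. eigenvalue \<gamma> \<mu> \<Longrightarrow> cmod \<mu> = 1"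
    and u: "u \<in> carrier_vec (k+l)" and v: "v \<in> carrier_vec (k+l)"
    and \<gamma>u: "\<gamma> *\<^sub>v u = a \<cdot>\<^sub>v u" and \<gamma>v: "\<gamma> *\<^sub>v v = b \<cdot>\<^sub>v v" and "a \<noteq> b"
  shows "herm_form k l u v = 0"
proof (cases "u = 0\<^sub>v (k+l) \<or> v = 0\<^sub>v (k+l)")
  case True
  then show ?thesis using herm_form_zero_left herm_form_zero_right by auto
next
  case False
  have "\<gamma> \<in> carrier_mat (k+l) (k+l)" using \<gamma> unfolding U_group_def by auto
  then have "eigenvector \<gamma> v b" using False v \<gamma>v unfolding eigenvector_def by auto
  then have "cmod b = 1" using unimodular unfolding eigenvalue_def by auto
  moreover have "complex_of_real (cmod b ^ 2) = b * cnj b" by (rule complex_norm_square)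
  ultimately have bb: "cnj b * b = 1" by (simp add: mult.commute)
  have "herm_form k l u v = herm_form k l (\<gamma> *\<^sub>v u) (\<gamma> *\<^sub>v v)"
    using \<gamma> u v unfolding U_group_def by auto
  also have "\<dots> = a * cnj b * herm_form k l u v"
    using \<gamma>u \<gamma>v herm_form_smult u v by simp
  finally have "(1 - a * cnj b) * herm_form k l u v = 0" by (simp add: algebra_simps)
  moreover have "a * cnj b \<noteq> 1"
  proof
    assume "a * cnj b = 1"
    then have "a * (cnj b * b) = b" by (simp flip: mult.assoc)
    with bb \<open>a \<noteq> b\<close> show False by simp
  qed
  ultimately show ?thesis by simp
qed

lemma diagonal_mat_mult_vec_eigen:
  assumes D: "D \<in> carrier_mat n n" "diagonal_mat D" and x: "x \<in> carrier_vec n"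
    and supp: "\<And>j. j < n \<Longrightarrow> x $ j \<noteq> 0 \<Longrightarrow> D $$ (j,j) = \<mu>"
  shows "D *\<^sub>v x = \<mu> \<cdot>\<^sub>v x"
proof (rule eq_vecI)
  show "dim_vec (D *\<^sub>v x) = dim_vec (\<mu> \<cdot>\<^sub>v x)" using D x by simp
  fix j assume "j < dim_vec (\<mu> \<cdot>\<^sub>v x)"
  then have j: "j < n" using x by simp
  have "(D *\<^sub>v x) $ j = (\<Sum>i\<in>{0..<n}. D $$ (j,i) * x $ i)"
    using D x j by (simp add: scalar_prod_def row_def)
  also have "\<dots> = (\<Sum>i\<in>{0..<n}. if i = j then D $$ (j,j) * x $ j else 0)"
    by (rule sum.cong) (use D j in \<open>auto simp: diagonal_mat_def\<close>)
  also have "\<dots> = \<mu> * x $ j" using j supp[OF j] by (cases "x $ j = 0") auto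
  finally show "(D *\<^sub>v x) $ j = (\<mu> \<cdot>\<^sub>v x) $ j" using j x by simp
qed

lemma similar_mat_wit_diagonal_eigen:
  fixes \<gamma> D P Q :: "complex mat"
  assumes wit: "similar_mat_wit \<gamma> D P Q" and \<gamma>: "\<gamma> \<in> carrier_mat n n" and "diagonal_mat D"
    and x: "x \<in> carrier_vec n"
    and supp: "\<And>j. j < n \<Longrightarrow> x $ j \<noteq> 0 \<Longrightarrow> D $$ (j,j) = \<mu>"
  shows "\<gamma> *\<^sub>v (P *\<^sub>v x) = \<mu> \<cdot>\<^sub>v (P *\<^sub>v x)"
proof -
  have D: "D \<in> carrier_mat n n" and P: "P \<in> carrier_mat n n" and Q: "Q \<in> carrier_mat n n"
    and QP: "Q * P = 1\<^sub>m n" and \<gamma>_eq: "\<gamma> = P * D * Q"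
    using wit \<gamma> unfolding similar_mat_wit_def Let_def by auto
  have "\<gamma> * P = (P * D) * (Q * P)"
    using \<gamma>_eq P D Q by (simp add: assoc_mult_mat[of _ n n _ n _ n])
  also have "\<dots> = P * D" using QP P D by simp
  finally have \<gamma>P: "\<gamma> * P = P * D" .
  have "\<gamma> *\<^sub>v (P *\<^sub>v x) = P *\<^sub>v (D *\<^sub>v x)"
    using \<gamma> P D x by (simp flip: assoc_mult_mat_vec add: \<gamma>P)
  also have "\<dots> = \<mu> \<cdot>\<^sub>v (P *\<^sub>v x)"
    using diagonal_mat_mult_vec_eigen[OF D \<open>diagonal_mat D\<close> x supp] mult_mat_vec[OF P x] by simp
  finally show ?thesis .
qed

text \<open>With d the diagonal of D, this is the projection of c onto the \<mu>-eigenspace of D.\<close>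
definition eigencomponent :: "(nat \<Rightarrow> complex) \<Rightarrow> complex \<Rightarrow> complex vec \<Rightarrow> complex vec" where
  "eigencomponent d \<mu> c = vec (dim_vec c) (\<lambda>j. if d j = \<mu> then c $ j else 0)"

lemma herm_form_sum_eigencomponents:
  assumes P: "P \<in> carrier_mat n n" and n: "n = k+l" and c: "c \<in> carrier_vec n"
    and orth: "\<And>i j. i < n \<Longrightarrow> j < n \<Longrightarrow> d i \<noteq> d j \<Longrightarrow>
                  herm_form k l (col P i) (col P j) = 0"
  shows "(\<Sum>\<mu>\<in>d ` {..<n}. herm_form k l (P *\<^sub>v eigencomponent d \<mu> c) (P *\<^sub>v eigencomponent d \<mu> c))
       = herm_form k l (P *\<^sub>v c) (P *\<^sub>v c)"
proof -
  let ?X = "\<lambda>\<mu>. eigencomponent d \<mu> c" and ?G = "\<lambda>i j. herm_form k l (col P i) (col P j)"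
  have X: "?X \<mu> \<in> carrier_vec n" for \<mu> using c unfolding eigencomponent_def by simp
  have "(\<Sum>\<mu>\<in>d ` {..<n}. herm_form k l (P *\<^sub>v ?X \<mu>) (P *\<^sub>v ?X \<mu>))
      = (\<Sum>\<mu>\<in>d ` {..<n}. \<Sum>i<n. \<Sum>j<n. ?X \<mu> $ i * cnj (?X \<mu> $ j) * ?G i j)"
    by (intro sum.cong refl herm_form_mult_mat_vec[OF P n X X])
  also have "\<dots> = (\<Sum>i<n. \<Sum>j<n. \<Sum>\<mu>\<in>d ` {..<n}. ?X \<mu> $ i * cnj (?X \<mu> $ j) * ?G i j)"
    by (subst sum.swap, rule sum.cong[OF refl], rule sum.swap)
  also have "\<dots> = (\<Sum>i<n. \<Sum>j<n. c $ i * cnj (c $ j) * ?G i j)"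
  proof (intro sum.cong refl)
    fix i j assume i: "i \<in> {..<n}" and j: "j \<in> {..<n}"
    have "(\<Sum>\<mu>\<in>d ` {..<n}. ?X \<mu> $ i * cnj (?X \<mu> $ j) * ?G i j)
        = (\<Sum>\<mu>\<in>d ` {..<n}. if \<mu> = d i then
             (if d j = d i then c $ i * cnj (c $ j) * ?G i j else 0) else 0)"
      using i j c by (intro sum.cong refl) (auto simp: eigencomponent_def)
    also have "\<dots> = (if d j = d i then c $ i * cnj (c $ j) * ?G i j else 0)"
      using i by (simp add: sum.delta[OF finite_imageI])
    also have "\<dots> = c $ i * cnj (c $ j) * ?G i j" using orth[of i j] i j by auto
    finally show "(\<Sum>\<mu>\<in>d ` {..<n}. ?X \<mu> $ i * cnj (?X \<mu> $ j) * ?G i j)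
        = c $ i * cnj (c $ j) * ?G i j" .
  qed
  also have "\<dots> = herm_form k l (P *\<^sub>v c) (P *\<^sub>v c)"
    by (rule herm_form_mult_mat_vec[OF P n c c, symmetric])
  finally show ?thesis .
qed

lemma U_group_diagonalizable_negative_eigenvector:
  assumes \<gamma>: "\<gamma> \<in> U_group k l" and "diagonalizable \<gamma>"
    and unimodular: "\<And>\<mu>. eigenvalue \<gamma> \<mu> \<Longrightarrow> cmod \<mu> = 1"
    and y: "y \<in> carrier_vec (k+l)" and y_neg: "Re (herm_form k l y y) < 0"
  shows "\<exists>w \<mu>. eigenvector \<gamma> w \<mu> \<and> Re (herm_form k l w w) < 0"
proof -
  define n where "n = k + l"
  have \<gamma>_carrier: "\<gamma> \<in> carrier_mat n n" using \<gamma> unfolding U_group_def n_def by auto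
  obtain D P Q where "diagonal_mat D" and wit: "similar_mat_wit \<gamma> D P Q"
    using \<open>diagonalizable \<gamma>\<close> unfolding diagonalizable_def similar_mat_def by auto
  have P: "P \<in> carrier_mat n n" and Q: "Q \<in> carrier_mat n n" and PQ: "P * Q = 1\<^sub>m n"
    using wit \<gamma>_carrier unfolding similar_mat_wit_def Let_def by auto
  define d where "d j = D $$ (j,j)" for j
  define c where "c = Q *\<^sub>v y"
  define X where "X \<mu> = eigencomponent d \<mu> c" for \<mu>
  have c: "c \<in> carrier_vec n" using Q y unfolding c_def n_def by simp
  have X: "X \<mu> \<in> carrier_vec n" for \<mu> using c unfolding X_def eigencomponent_def by simp
  have "P *\<^sub>v c = y"
    unfolding c_def using P Q PQ y n_def by (simp flip: assoc_mult_mat_vec[of _ n n _ n])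
  have eigen: "\<gamma> *\<^sub>v (P *\<^sub>v x) = \<mu> \<cdot>\<^sub>v (P *\<^sub>v x)"
    if "x \<in> carrier_vec n" "\<And>j. j < n \<Longrightarrow> x $ j \<noteq> 0 \<Longrightarrow> d j = \<mu>" for x \<mu>
    using similar_mat_wit_diagonal_eigen[OF wit \<gamma>_carrier \<open>diagonal_mat D\<close>] that
    unfolding d_def by blast
  have orth: "herm_form k l (col P i) (col P j) = 0" if "i < n" "j < n" "d i \<noteq> d j" for i j
  proof -
    have col: "col P i = P *\<^sub>v unit_vec n i" "col P j = P *\<^sub>v unit_vec n j"
      using P that by (auto intro!: eq_vecI)
    have "\<gamma> *\<^sub>v col P i = d i \<cdot>\<^sub>v col P i" "\<gamma> *\<^sub>v col P j = d j \<cdot>\<^sub>v col P j"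
      unfolding col by (rule eigen, simp, simp add: unit_vec_def split: if_splits)+
    moreover have "col P i \<in> carrier_vec (k+l)" "col P j \<in> carrier_vec (k+l)"
      using P unfolding n_def by (auto simp: col_def)
    ultimately show ?thesis
      using U_group_eigenvectors_orthogonal[OF \<gamma> unimodular] that(3) by blast
  qed
  have sum_eq: "(\<Sum>\<mu>\<in>d ` {..<n}. Re (herm_form k l (P *\<^sub>v X \<mu>) (P *\<^sub>v X \<mu>)))
      = Re (herm_form k l y y)"
    using herm_form_sum_eigencomponents[OF P n_def c orth] \<open>P *\<^sub>v c = y\<close>
    unfolding X_def by (simp flip: Re_sum)
  have "\<exists>\<mu>\<in>d ` {..<n}. Re (herm_form k l (P *\<^sub>v X \<mu>) (P *\<^sub>v X \<mu>)) < 0"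
  proof (rule ccontr)
    assume "\<not> ?thesis"
    then have "0 \<le> (\<Sum>\<mu>\<in>d ` {..<n}. Re (herm_form k l (P *\<^sub>v X \<mu>) (P *\<^sub>v X \<mu>)))"
      by (intro sum_nonneg) (auto simp: not_less)
    with sum_eq y_neg show False by linarith
  qed
  then obtain \<mu> where neg: "Re (herm_form k l (P *\<^sub>v X \<mu>) (P *\<^sub>v X \<mu>)) < 0"
    by blast
  have "P *\<^sub>v X \<mu> \<noteq> 0\<^sub>v n"
    using neg herm_form_zero_left[of k l] unfolding n_def by auto
  moreover have "\<gamma> *\<^sub>v (P *\<^sub>v X \<mu>) = \<mu> \<cdot>\<^sub>v (P *\<^sub>v X \<mu>)"
    using c by (intro eigen X) (auto simp: X_def eigencomponent_def split: if_splits)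
  ultimately have "eigenvector \<gamma> (P *\<^sub>v X \<mu>) \<mu>"
    unfolding eigenvector_def using P X \<gamma>_carrier by auto
  with neg show ?thesis by blast
qed

lemma neg_cone_subset_vec_closure: "neg_cone k l \<subseteq> vec_closure (k+l) (neg_cone k l)"
  unfolding vec_closure_def neg_cone_def by force

theorem mainTheorem14:
  fixes k l :: nat and \<gamma> :: "complex mat"
  assumes "0 < k" and "k < l"
    and "\<gamma> \<in> U_group k l"
    and "diagonalizable \<gamma>"
    and "\<And>\<mu>. eigenvalue \<gamma> \<mu> \<Longrightarrow> cmod \<mu> = 1"
  shows "\<exists>v \<mu>. eigenvector \<gamma> v \<mu> \<and> v \<in> vec_closure (k+l) (neg_cone k l)"
proof -
  obtain w \<mu> where w: "eigenvector \<gamma> w \<mu>" and neg: "Re (herm_form k l w w) < 0"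
    using U_group_diagonalizable_negative_eigenvector[OF assms(3,4,5), of "unit_vec (k+l) 0"]
      herm_form_unit_vec_0[OF \<open>0 < k\<close>] by auto
  have "w \<in> carrier_vec (k+l)"
    using w \<open>\<gamma> \<in> U_group k l\<close> unfolding eigenvector_def U_group_def by auto
  with neg have "w \<in> neg_cone k l" unfolding neg_cone_def by (simp add: Im_herm_form_self)
  with w neg_cone_subset_vec_closure show ?thesis by blast
qed

end
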